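(* There is an absolute constant $C$ such that the following holds. Let $\mathcal P$ be an uncertain point set in $\mathbb R^d$, $\varepsilon>0$, $\delta\in(0,1)$, and $T=\{z_1,\dots,z_m\}\subset\mathbb R^d$ a finite set such that for every traversal $Q$ the chosen median $m_Q$ is $\frac{\varepsilon}{1+\varepsilon}$-covered by some point of $T$. Let $\hat w_i=\Pr_Q[f_T(m_Q)=z_i]$ for $Q$ a uniformly random traversal. Draw $N\ge \frac{C}{\varepsilon^2}(d+\log\frac1\delta)$ independent uniformly random traversals $Q_1,\dots,Q_N$ and let $c_i=\frac1N|\{t: f_T(m_{Q_t})=z_i\}|$. Then $$\Pr\Big[\max_{1\le i\le m}|c_i-\hat w_i|\le\varepsilon\Big]>1-\delta.$$
   Context: Each uncertain point $P_i$ ($i=1,\dots,n$) has $k$ equally likely locations $p_{i,1},\dots,p_{i,k}\in\mathbb R^d$; a uniformly random traversal picks independently for each $i$ a uniformly random location $q_i$ of $P_i$. $\mathrm{cost}(p,Q)=\frac1n\sum_i\|p-q_i\|$; an $L_1$ median of $Q$ minimizes $\mathrm{cost}(\cdot,Q)$; $Q\mapsto m_Q$ is a fixed rule selecting one $L_1$ median of each traversal. $\widehat{\mathrm{cost}}(x)=\frac1n\sum_i\min_j\|x-p_{i,j}\|$. A point $z$ $\gamma$-covers $q$ if $\|z-q\|\le\gamma\,\widehat{\mathrm{cost}}(z)$. $f_T(q)$ is the point $z\in T$ minimizing $\|q-z\|$ among those $z\in T$ that $\frac{\varepsilon}{1+\varepsilon}$-cover $q$, ties broken by lexicographically smallest coordinates.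 *)

theory Defs
  imports "HOL-Probability.Probability"
begin

text \<open>Points of R^d are represented as real lists of length d (so that the
  dimension d can be quantified inside the statement, after the absolute constant).\<close>

definition edist :: "real list \<Rightarrow> real list \<Rightarrow> real" where
  "edist x y = sqrt (\<Sum>l<length x. (x ! l - y ! l)^2)"

text \<open>An uncertain point set: P i j is the j-th location of the i-th point (i < n, j < k).
  A traversal is encoded by its choice function sigma (sigma i < k); its points are pts P sigma.\<close>

definition traversals :: "nat \<Rightarrow> nat \<Rightarrow> (nat \<Rightarrow> nat) set" where
  "traversals n k = PiE {..<n} (\<lambda>_. {..<k})"

definition pts :: "(nat \<Rightarrow> nat \<Rightarrow> real list) \<Rightarrow> (nat \<Rightarrow> nat) \<Rightarrow> nat \<Rightarrow> real list" where
  "pts P \<sigma> = (\<lambda>i. P i (\<sigma> i))"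

definition cost :: "nat \<Rightarrow> (nat \<Rightarrow> real list) \<Rightarrow> real list \<Rightarrow> real" where
  "cost n Q p = (1 / real n) * (\<Sum>i<n. edist p (Q i))"

definition is_L1_median :: "nat \<Rightarrow> nat \<Rightarrow> (nat \<Rightarrow> real list) \<Rightarrow> real list \<Rightarrow> bool" where
  "is_L1_median d n Q m \<longleftrightarrow> length m = d \<and> (\<forall>p. length p = d \<longrightarrow> cost n Q m \<le> cost n Q p)"

definition cost_hat :: "nat \<Rightarrow> nat \<Rightarrow> (nat \<Rightarrow> nat \<Rightarrow> real list) \<Rightarrow> real list \<Rightarrow> real" where
  "cost_hat n k P x = (1 / real n) * (\<Sum>i<n. Min ((\<lambda>j. edist x (P i j)) ` {..<k}))"

definition covers :: "nat \<Rightarrow> nat \<Rightarrow> (nat \<Rightarrow> nat \<Rightarrow> real list) \<Rightarrow> real \<Rightarrow> real list \<Rightarrow> real list \<Rightarrow> bool" where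
  "covers n k P \<gamma> z q \<longleftrightarrow> edist z q \<le> \<gamma> * cost_hat n k P z"

definition lex_less :: "real list \<Rightarrow> real list \<Rightarrow> bool" where
  "lex_less x y \<longleftrightarrow> (\<exists>l<length x. x ! l < y ! l \<and> (\<forall>l'<l. x ! l' = y ! l'))"

definition lex_le :: "real list \<Rightarrow> real list \<Rightarrow> bool" where
  "lex_le x y \<longleftrightarrow> x = y \<or> lex_less x y"

definition fT :: "nat \<Rightarrow> nat \<Rightarrow> (nat \<Rightarrow> nat \<Rightarrow> real list) \<Rightarrow> real \<Rightarrow> real list set \<Rightarrow> real list \<Rightarrow> real list" where
  "fT n k P \<epsilon> T q =
     (let S = {z\<in>T. covers n k P (\<epsilon> / (1 + \<epsilon>)) z q};
          M = {z\<in>S. \<forall>z'\<in>S. edist q z \<le> edist q z'}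
      in THE z. z \<in> M \<and> (\<forall>z'\<in>M. lex_le z z'))"

end

theory Submission
  imports Defs
begin

text \<open>For a fixed z \<in> T, the number of sampled traversals Q_t with f_T(m_Q_t) = z is binomial
  with parameters N and p_z, the weight of z. Optimising the exponential moment in the Chernoff
  bound, separately for large and for small p_z, bounds the probability that the empirical
  frequency deviates from p_z by more than \<epsilon> by p_z \<cdot> B, where
  B = 2 exp (- N \<epsilon>^2 / 4) + (2 e / \<epsilon>) exp (- N \<epsilon> / 2) is the deviation bound below.
  The events f_T(m_Q) = z are disjoint, so the p_z sum to at most 1 and the union bound over T
  costs only B, whatever the size of T; for N \<ge> 100 (d + ln (1 / \<delta>)) / \<epsilon>^2 one has B < \<delta>.
  The geometry enters only in the degenerate case d = 0, where all medians coincide and every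
  frequency is exact; the case \<epsilon> \<ge> 1 is trivial.\<close>

lemma exp_neg_le_inverse:
  fixes x :: real
  assumes "0 \<le> x"
  shows "exp (- x) \<le> 1 / (1 + x)"
  using exp_ge_add_one_self[of x] assms by (simp add: exp_minus divide_simps)

lemma exp_neg_le_quadratic:
  fixes m :: real
  assumes "0 \<le> m"
  shows "exp (- m) \<le> 1 - m + m\<^sup>2"
proof -
  have "exp (- m) \<le> 1 / (1 + m)"
    using assms by (rule exp_neg_le_inverse)
  also have "\<dots> \<le> 1 - m + m\<^sup>2"
    using assms by (simp add: divide_simps algebra_simps power2_eq_square mult_nonneg_nonneg)
  finally show ?thesis .
qed

text \<open>The source of the factor \<open>p\<close> in the tail bounds below.\<close>

lemma exp_neg_div_le:
  fixes a q :: real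
  assumes a: "1 \<le> a" and q: "0 < q" "q \<le> 1"
  shows "exp (- a / q) \<le> q * exp (- a)"
proof -
  have "ln (1 / q) \<le> 1 / q - 1"
    using q by (intro ln_le_minus_one) simp
  also have "\<dots> \<le> a * (1 / q - 1)"
    using mult_right_mono[OF a, of "1 / q - 1"] q by simp
  finally have "- a / q \<le> ln q + - a"
    using q by (simp add: ln_div field_simps)
  then have "exp (- a / q) \<le> exp (ln q + - a)"
    by simp
  also have "\<dots> = q * exp (- a)"
    using q by (simp only: exp_add exp_ln)
  finally show ?thesis .
qed

lemma upper_tail_exponent_large_p:
  fixes p \<epsilon> N :: real
  assumes p: "\<epsilon> \<le> 2 * p" "p \<le> 1" and \<epsilon>: "0 < \<epsilon>" and N: "0 \<le> N" "4 \<le> N * \<epsilon>\<^sup>2"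
  shows "exp (N * p * (exp (\<epsilon> / (2 * p)) - 1) - \<epsilon> / (2 * p) * (N * (p + \<epsilon>)))
         \<le> p * exp (- (N * \<epsilon>\<^sup>2 / 4))"
proof -
  define m where "m = \<epsilon> / (2 * p)"
  have "0 < p"
    using p \<epsilon> by simp
  have "exp m - 1 \<le> m + m\<^sup>2"
    using exp_bound[of m] p \<epsilon> \<open>0 < p\<close> by (simp add: m_def)
  then have "N * p * (exp m - 1) \<le> N * p * (m + m\<^sup>2)"
    using \<open>0 < p\<close> N by (intro mult_left_mono) auto
  also have "N * p * (m + m\<^sup>2) = - (N * \<epsilon>\<^sup>2 / 4) / p + m * (N * (p + \<epsilon>))"
    using \<open>0 < p\<close> by (simp add: m_def field_simps power2_eq_square)
  finally have "exp (N * p * (exp m - 1) - m * (N * (p + \<epsilon>))) \<le> exp (- (N * \<epsilon>\<^sup>2 / 4) / p)"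
    by simp
  also have "\<dots> \<le> p * exp (- (N * \<epsilon>\<^sup>2 / 4))"
    using exp_neg_div_le[of "N * \<epsilon>\<^sup>2 / 4" p] N p \<open>0 < p\<close> by simp
  finally show ?thesis
    by (simp only: m_def)
qed

lemma upper_tail_exponent_small_p:
  fixes p \<epsilon> N :: real
  assumes p: "0 < p" "2 * p < \<epsilon>" and N: "0 \<le> N" "1 \<le> N * \<epsilon>"
  shows "\<exists>\<mu>\<ge>0. exp (N * p * (exp \<mu> - 1) - \<mu> * (N * (p + \<epsilon>)))
           \<le> p * (2 * exp 1 / \<epsilon> * exp (- (N * \<epsilon> / 2)))"
proof (cases "2 * exp 1 * p < \<epsilon>")
  case True
  define \<mu> where "\<mu> = ln (\<epsilon> / (2 * p))"
  have exp_\<mu>: "exp \<mu> = \<epsilon> / (2 * p)"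
    using p by (simp add: \<mu>_def)
  have "exp 1 \<le> exp \<mu>"
    using True p by (simp add: exp_\<mu> field_simps)
  then have "1 \<le> \<mu>"
    by simp
  have "N * p * (exp \<mu> - 1) - \<mu> * (N * (p + \<epsilon>)) \<le> N * \<epsilon> / 2 - \<mu> * (N * \<epsilon>)"
    using p N \<open>1 \<le> \<mu>\<close> by (simp add: exp_\<mu> field_simps)
  also have "\<dots> = - (N * \<epsilon> / 2) - (\<mu> - 1) * (N * \<epsilon>)"
    by (simp add: algebra_simps)
  also have "\<dots> \<le> - (N * \<epsilon> / 2) - (\<mu> - 1)"
    using mult_left_mono[OF N(2), of "\<mu> - 1"] \<open>1 \<le> \<mu>\<close> by simp
  finally have "exp (N * p * (exp \<mu> - 1) - \<mu> * (N * (p + \<epsilon>))) \<le> exp (1 - \<mu> + - (N * \<epsilon> / 2))"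
    by simp
  also have "\<dots> = exp 1 / exp \<mu> * exp (- (N * \<epsilon> / 2))"
    by (simp only: exp_add exp_diff)
  also have "\<dots> = p * (2 * exp 1 / \<epsilon> * exp (- (N * \<epsilon> / 2)))"
    using p unfolding exp_\<mu> by (simp add: field_simps)
  finally show ?thesis
    using \<open>1 \<le> \<mu>\<close> by (intro exI[of _ \<mu>]) auto
next
  case False
  have "p * (exp 1 - 2) \<le> p"
    using exp_le p by (intro mult_left_le) auto
  then have "p * (exp 1 - 2) \<le> \<epsilon> / 2"
    using p by linarith
  then have "N * p * (exp 1 - 1) - 1 * (N * (p + \<epsilon>)) \<le> - (N * \<epsilon> / 2)"
    using mult_left_mono[of "p * (exp 1 - 2)" "\<epsilon> / 2" N] N by (simp add: algebra_simps)
  then have "exp (N * p * (exp 1 - 1) - 1 * (N * (p + \<epsilon>))) \<le> 1 * exp (- (N * \<epsilon> / 2))"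
    by simp
  also have "\<dots> \<le> p * (2 * exp 1 / \<epsilon>) * exp (- (N * \<epsilon> / 2))"
    using False p by (intro mult_right_mono) (auto simp: field_simps)
  finally show ?thesis
    by (intro exI[of _ 1]) (auto simp: mult.assoc)
qed

lemma lower_tail_exponent:
  fixes p \<epsilon> N :: real
  assumes p: "0 < p" "p \<le> 1" and \<epsilon>: "0 < \<epsilon>" and N: "0 \<le> N" "4 \<le> N * \<epsilon>\<^sup>2"
  shows "exp (N * p * (exp (- (\<epsilon> / (2 * p))) - 1) + \<epsilon> / (2 * p) * (N * (p - \<epsilon>)))
         \<le> p * exp (- (N * \<epsilon>\<^sup>2 / 4))"
proof -
  define m where "m = \<epsilon> / (2 * p)"
  have "N * p * (exp (- m) - 1) \<le> N * p * (- m + m\<^sup>2)"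
    using exp_neg_le_quadratic[of m] p \<epsilon> N by (intro mult_left_mono) (auto simp: m_def)
  also have "N * p * (- m + m\<^sup>2) = - (N * \<epsilon>\<^sup>2 / 4) / p - m * (N * (p - \<epsilon>))"
    using p by (simp add: m_def field_simps power2_eq_square)
  finally have "exp (N * p * (exp (- m) - 1) + m * (N * (p - \<epsilon>))) \<le> exp (- (N * \<epsilon>\<^sup>2 / 4) / p)"
    by simp
  also have "\<dots> \<le> p * exp (- (N * \<epsilon>\<^sup>2 / 4))"
    using exp_neg_div_le[of "N * \<epsilon>\<^sup>2 / 4" p] N p by simp
  finally show ?thesis
    by (simp only: m_def)
qed

lemma sum_PiE_exp_hits:
  fixes A :: "'a \<Rightarrow> bool"
  assumes "finite \<Omega>"
  shows "(\<Sum>Qs\<in>PiE {..<N} (\<lambda>_. \<Omega>). exp (\<mu> * real (card {t\<in>{..<N}. A (Qs t)})))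
         = (\<Sum>\<omega>\<in>\<Omega>. if A \<omega> then exp \<mu> else 1) ^ N"
proof -
  have "exp (\<mu> * real (card {t\<in>{..<N}. A (Qs t)})) = (\<Prod>t<N. if A (Qs t) then exp \<mu> else 1)" for Qs
    by (simp add: prod.If_cases exp_of_nat_mult[symmetric] Int_def mult.commute)
  then show ?thesis
    using prod_sum_PiE[of "{..<N}" "\<lambda>_. \<Omega>" "\<lambda>_ \<omega>. if A \<omega> then exp \<mu> else 1"] assms by simp
qed

lemma sum_if_exp_eq_card_mult:
  fixes A :: "'a \<Rightarrow> bool"
  assumes "finite \<Omega>" "\<Omega> \<noteq> {}"
  shows "(\<Sum>\<omega>\<in>\<Omega>. if A \<omega> then exp \<mu> else 1)
         = real (card \<Omega>) * (1 + measure_pmf.prob (pmf_of_set \<Omega>) {\<omega>. A \<omega>} * (exp \<mu> - 1))"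
proof -
  have "real (card (\<Omega> \<inter> - Collect A)) = real (card \<Omega>) - real (card (\<Omega> \<inter> Collect A))"
    using card_Int_Diff[OF assms(1), of "Collect A"] by (simp add: Diff_eq)
  moreover have "card \<Omega> \<noteq> 0"
    using assms by simp
  ultimately show ?thesis
    using assms by (simp add: sum.If_cases measure_pmf_of_set field_simps) (simp flip: distrib_left)
qed

lemma chernoff_bound_hits:
  fixes A :: "'a \<Rightarrow> bool"
  assumes fin: "finite \<Omega>" and ne: "\<Omega> \<noteq> {}"
  defines "p \<equiv> measure_pmf.prob (pmf_of_set \<Omega>) {\<omega>. A \<omega>}"
  shows "measure_pmf.prob (pmf_of_set (PiE {..<N} (\<lambda>_. \<Omega>)))
           {Qs. b \<le> \<mu> * real (card {t\<in>{..<N}. A (Qs t)})}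
         \<le> exp (real N * p * (exp \<mu> - 1) - b)"
proof -
  let ?\<Pi> = "PiE {..<N} (\<lambda>_. \<Omega>)"
  let ?c = "\<lambda>Qs. real (card {t\<in>{..<N}. A (Qs t)})"
  let ?S = "{Qs. b \<le> \<mu> * ?c Qs}"
  have fin_\<Pi>: "finite ?\<Pi>" and ne_\<Pi>: "?\<Pi> \<noteq> {}"
    using fin ne by (simp_all add: finite_PiE PiE_eq_empty_iff)
  have "0 \<le> p" "p \<le> 1"
    by (simp_all add: p_def)
  then have "0 \<le> (1 - p) + p * exp \<mu>"
    by simp
  then have "0 \<le> 1 + p * (exp \<mu> - 1)"
    by (simp add: algebra_simps)
  have "(\<Sum>\<omega>\<in>\<Omega>. if A \<omega> then exp \<mu> else 1) ^ N = real (card \<Omega>) ^ N * (1 + p * (exp \<mu> - 1)) ^ N"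
    unfolding sum_if_exp_eq_card_mult[OF fin ne] p_def by (simp add: power_mult_distrib)
  also have "\<dots> \<le> real (card \<Omega>) ^ N * exp (p * (exp \<mu> - 1)) ^ N"
    using \<open>0 \<le> 1 + p * (exp \<mu> - 1)\<close> by (intro mult_left_mono power_mono) simp_all
  finally have sum_bound: "(\<Sum>\<omega>\<in>\<Omega>. if A \<omega> then exp \<mu> else 1) ^ N
                          \<le> real (card \<Omega>) ^ N * exp (real N * p * (exp \<mu> - 1))"
    by (simp add: exp_of_nat_mult[symmetric] mult.assoc)
  have "real (card (?\<Pi> \<inter> ?S)) = (\<Sum>Qs\<in>?\<Pi> \<inter> ?S. 1)"
    by simp
  also have "\<dots> \<le> (\<Sum>Qs\<in>?\<Pi> \<inter> ?S. exp (\<mu> * ?c Qs - b))"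
    by (intro sum_mono) auto
  also have "\<dots> \<le> (\<Sum>Qs\<in>?\<Pi>. exp (\<mu> * ?c Qs - b))"
    using fin_\<Pi> by (intro sum_mono2) auto
  also have "\<dots> = (\<Sum>Qs\<in>?\<Pi>. exp (\<mu> * ?c Qs)) * exp (- b)"
    by (simp add: exp_diff exp_minus divide_inverse sum_distrib_right)
  also have "\<dots> = (\<Sum>\<omega>\<in>\<Omega>. if A \<omega> then exp \<mu> else 1) ^ N * exp (- b)"
    by (simp only: sum_PiE_exp_hits[OF fin])
  also have "\<dots> \<le> real (card ?\<Pi>) * exp (real N * p * (exp \<mu> - 1) - b)"
    using mult_right_mono[OF sum_bound, of "exp (- b)"] fin
    by (simp add: card_PiE exp_diff exp_minus divide_inverse mult.assoc)
  finally have "real (card (?\<Pi> \<inter> ?S)) \<le> real (card ?\<Pi>) * exp (real N * p * (exp \<mu> - 1) - b)" .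
  then show ?thesis
    unfolding measure_pmf_of_set[OF ne_\<Pi> fin_\<Pi>] using fin_\<Pi> ne_\<Pi>
    by (simp add: pos_divide_le_eq card_gt_0_iff mult.commute)
qed

lemma prob_hits_above_le:
  fixes A :: "'a \<Rightarrow> bool"
  assumes fin: "finite \<Omega>" and ne: "\<Omega> \<noteq> {}"
    and \<epsilon>: "0 < \<epsilon>" "\<epsilon> < 1" and N: "4 \<le> real N * \<epsilon>\<^sup>2"
  defines "p \<equiv> measure_pmf.prob (pmf_of_set \<Omega>) {\<omega>. A \<omega>}"
  shows "measure_pmf.prob (pmf_of_set (PiE {..<N} (\<lambda>_. \<Omega>)))
           {Qs. real N * (p + \<epsilon>) < real (card {t\<in>{..<N}. A (Qs t)})}
         \<le> p * (exp (- (real N * \<epsilon>\<^sup>2 / 4)) + 2 * exp 1 / \<epsilon> * exp (- (real N * \<epsilon> / 2)))"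
    (is "measure_pmf.prob ?M {Qs. ?s < ?c Qs} \<le> p * ?K")
proof (cases "p = 0")
  case True
  then have "\<forall>\<omega>\<in>\<Omega>. \<not> A \<omega>"
    using fin ne by (auto simp: p_def measure_pmf_zero_iff)
  then have no_hits: "{t\<in>{..<N}. A (Qs t)} = {}" if "Qs \<in> PiE {..<N} (\<lambda>_. \<Omega>)" for Qs
    using that by (auto dest: PiE_mem)
  have "\<not> ?s < ?c Qs" if "Qs \<in> PiE {..<N} (\<lambda>_. \<Omega>)" for Qs
    unfolding no_hits[OF that] using True \<epsilon> by (simp add: not_less)
  then have "measure_pmf.prob ?M {Qs. ?s < ?c Qs} = 0"
    using fin ne by (auto simp: measure_pmf_zero_iff finite_PiE PiE_eq_empty_iff)
  then show ?thesis
    using True by simp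
next
  case False
  have "0 \<le> p" "p \<le> 1"
    by (simp_all add: p_def)
  with False have "0 < p"
    by simp
  have "real N * \<epsilon>\<^sup>2 \<le> real N * \<epsilon>"
    using \<epsilon> by (intro mult_left_mono) (auto simp: power2_eq_square)
  then have "1 \<le> real N * \<epsilon>"
    using N by linarith
  obtain \<mu> where "0 \<le> \<mu>" and \<mu>: "exp (real N * p * (exp \<mu> - 1) - \<mu> * ?s) \<le> p * ?K"
  proof (cases "\<epsilon> \<le> 2 * p")
    case True
    have "exp (real N * p * (exp (\<epsilon> / (2 * p)) - 1) - \<epsilon> / (2 * p) * ?s)
          \<le> p * exp (- (real N * \<epsilon>\<^sup>2 / 4))"
      by (rule upper_tail_exponent_large_p[OF True \<open>p \<le> 1\<close> \<epsilon>(1) of_nat_0_le_iff N])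
    also have "\<dots> \<le> p * ?K"
      using \<open>0 < p\<close> \<epsilon> by (intro mult_left_mono) auto
    finally show ?thesis
      by (rule that[rotated]) (use \<open>0 < p\<close> \<epsilon> in simp)
  next
    case False
    then obtain \<mu> where "0 \<le> \<mu>"
      and "exp (real N * p * (exp \<mu> - 1) - \<mu> * ?s) \<le> p * (2 * exp 1 / \<epsilon> * exp (- (real N * \<epsilon> / 2)))"
      using upper_tail_exponent_small_p[OF \<open>0 < p\<close> _ of_nat_0_le_iff \<open>1 \<le> real N * \<epsilon>\<close>] by auto
    moreover have "p * (2 * exp 1 / \<epsilon> * exp (- (real N * \<epsilon> / 2))) \<le> p * ?K"
      using \<open>0 < p\<close> by (intro mult_left_mono) auto
    ultimately show ?thesis
      using that by fastforce
  qed
  have "measure_pmf.prob ?M {Qs. ?s < ?c Qs} \<le> measure_pmf.prob ?M {Qs. \<mu> * ?s \<le> \<mu> * ?c Qs}"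
    using \<open>0 \<le> \<mu>\<close> by (intro measure_pmf.finite_measure_mono) (auto intro: mult_left_mono)
  also have "\<dots> \<le> exp (real N * p * (exp \<mu> - 1) - \<mu> * ?s)"
    unfolding p_def by (rule chernoff_bound_hits[OF fin ne])
  finally show ?thesis
    using \<mu> by linarith
qed

lemma prob_hits_below_le:
  fixes A :: "'a \<Rightarrow> bool"
  assumes fin: "finite \<Omega>" and ne: "\<Omega> \<noteq> {}" and \<epsilon>: "0 < \<epsilon>" and N: "4 \<le> real N * \<epsilon>\<^sup>2"
  defines "p \<equiv> measure_pmf.prob (pmf_of_set \<Omega>) {\<omega>. A \<omega>}"
  shows "measure_pmf.prob (pmf_of_set (PiE {..<N} (\<lambda>_. \<Omega>)))
           {Qs. real (card {t\<in>{..<N}. A (Qs t)}) < real N * (p - \<epsilon>)}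
         \<le> p * exp (- (real N * \<epsilon>\<^sup>2 / 4))"
    (is "measure_pmf.prob ?M {Qs. ?c Qs < ?s} \<le> _")
proof (cases "\<epsilon> < p")
  case True
  define m where "m = \<epsilon> / (2 * p)"
  have "0 < p" "p \<le> 1"
    using True \<epsilon> by (simp_all add: p_def)
  have "0 \<le> m"
    using \<open>0 < p\<close> \<epsilon> by (simp add: m_def)
  then have "m * ?c Qs \<le> m * ?s" if "?c Qs < ?s" for Qs
    using that by (intro mult_left_mono) simp_all
  then have "measure_pmf.prob ?M {Qs. ?c Qs < ?s} \<le> measure_pmf.prob ?M {Qs. - m * ?s \<le> - m * ?c Qs}"
    by (intro measure_pmf.finite_measure_mono) auto
  also have "\<dots> \<le> exp (real N * p * (exp (- m) - 1) - - m * ?s)"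
    unfolding p_def by (rule chernoff_bound_hits[OF fin ne])
  also have "\<dots> \<le> p * exp (- (real N * \<epsilon>\<^sup>2 / 4))"
    using lower_tail_exponent[OF \<open>0 < p\<close> \<open>p \<le> 1\<close> \<epsilon> of_nat_0_le_iff N] by (simp add: m_def)
  finally show ?thesis .
next
  case False
  then have "?s \<le> 0"
    by (simp add: mult_nonneg_nonpos)
  then have "{Qs. ?c Qs < ?s} = {}"
    by (auto simp: not_less intro: order.trans)
  then show ?thesis
    by (simp add: p_def)
qed

definition deviation_bound :: "real \<Rightarrow> real \<Rightarrow> real" where
  "deviation_bound \<epsilon> N = 2 * exp (- (N * \<epsilon>\<^sup>2 / 4)) + 2 * exp 1 / \<epsilon> * exp (- (N * \<epsilon> / 2))"

lemma prob_frequency_deviation_le: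
  fixes A :: "'a \<Rightarrow> bool"
  assumes fin: "finite \<Omega>" and ne: "\<Omega> \<noteq> {}"
    and \<epsilon>: "0 < \<epsilon>" "\<epsilon> < 1" and N: "4 \<le> real N * \<epsilon>\<^sup>2"
  defines "p \<equiv> measure_pmf.prob (pmf_of_set \<Omega>) {\<omega>. A \<omega>}"
  shows "measure_pmf.prob (pmf_of_set (PiE {..<N} (\<lambda>_. \<Omega>)))
           {Qs. \<epsilon> < \<bar>real (card {t\<in>{..<N}. A (Qs t)}) / real N - p\<bar>}
         \<le> p * deviation_bound \<epsilon> N"
proof -
  let ?M = "pmf_of_set (PiE {..<N} (\<lambda>_. \<Omega>))"
  let ?c = "\<lambda>Qs. real (card {t\<in>{..<N}. A (Qs t)})"
  have "0 < real N"
    using N by (cases N) auto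
  have "real N * (p + \<epsilon>) < ?c Qs \<or> ?c Qs < real N * (p - \<epsilon>)"
    if "\<epsilon> < \<bar>?c Qs / real N - p\<bar>" for Qs
  proof -
    from that have "p + \<epsilon> < ?c Qs / real N \<or> ?c Qs / real N < p - \<epsilon>"
      by arith
    then show ?thesis
      using \<open>0 < real N\<close> by (simp add: pos_less_divide_eq pos_divide_less_eq mult.commute)
  qed
  then have "measure_pmf.prob ?M {Qs. \<epsilon> < \<bar>?c Qs / real N - p\<bar>}
             \<le> measure_pmf.prob ?M ({Qs. real N * (p + \<epsilon>) < ?c Qs} \<union> {Qs. ?c Qs < real N * (p - \<epsilon>)})"
    by (intro measure_pmf.finite_measure_mono) auto
  also have "\<dots> \<le> measure_pmf.prob ?M {Qs. real N * (p + \<epsilon>) < ?c Qs}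
                  + measure_pmf.prob ?M {Qs. ?c Qs < real N * (p - \<epsilon>)}"
    by (rule measure_Un_le) simp_all
  also have "\<dots> \<le> p * (exp (- (real N * \<epsilon>\<^sup>2 / 4)) + 2 * exp 1 / \<epsilon> * exp (- (real N * \<epsilon> / 2)))
                  + p * exp (- (real N * \<epsilon>\<^sup>2 / 4))"
    unfolding p_def
    by (intro add_mono prob_hits_above_le[OF fin ne \<epsilon> N] prob_hits_below_le[OF fin ne \<epsilon>(1) N])
  also have "\<dots> = p * deviation_bound \<epsilon> N"
    by (simp add: deviation_bound_def algebra_simps)
  finally show ?thesis .
qed

definition frequencies_close :: "nat \<Rightarrow> ('a \<Rightarrow> 'b) \<Rightarrow> 'a set \<Rightarrow> 'b set \<Rightarrow> real \<Rightarrow> (nat \<Rightarrow> 'a) \<Rightarrow> bool" where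
  "frequencies_close N g \<Omega> T \<epsilon> Qs \<longleftrightarrow>
     (\<forall>z\<in>T. \<bar>real (card {t\<in>{..<N}. g (Qs t) = z}) / real N
               - measure_pmf.prob (pmf_of_set \<Omega>) {\<omega>. g \<omega> = z}\<bar> \<le> \<epsilon>)"

lemma prob_all_frequencies_close_ge:
  fixes g :: "'a \<Rightarrow> 'b"
  assumes fin: "finite \<Omega>" and ne: "\<Omega> \<noteq> {}" and fin_T: "finite T"
    and \<epsilon>: "0 < \<epsilon>" "\<epsilon> < 1" and N: "4 \<le> real N * \<epsilon>\<^sup>2"
  shows "measure_pmf.prob (pmf_of_set (PiE {..<N} (\<lambda>_. \<Omega>))) {Qs. frequencies_close N g \<Omega> T \<epsilon> Qs}
         \<ge> 1 - deviation_bound \<epsilon> N"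
proof -
  let ?M = "pmf_of_set (PiE {..<N} (\<lambda>_. \<Omega>))"
  let ?p = "\<lambda>z. measure_pmf.prob (pmf_of_set \<Omega>) {\<omega>. g \<omega> = z}"
  define F where "F z = {Qs. \<epsilon> < \<bar>real (card {t\<in>{..<N}. g (Qs t) = z}) / real N - ?p z\<bar>}" for z
  have "(\<Sum>z\<in>T. ?p z) = measure_pmf.prob (pmf_of_set \<Omega>) (\<Union>z\<in>T. {\<omega>. g \<omega> = z})"
    using fin_T by (intro measure_pmf.finite_measure_finite_Union[symmetric]) (auto simp: disjoint_family_on_def)
  also have "\<dots> \<le> 1"
    by simp
  finally have sum_p: "(\<Sum>z\<in>T. ?p z) \<le> 1" .
  have "0 \<le> deviation_bound \<epsilon> N"
    using \<epsilon> by (simp add: deviation_bound_def)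
  have "measure_pmf.prob ?M (\<Union>z\<in>T. F z) \<le> (\<Sum>z\<in>T. measure_pmf.prob ?M (F z))"
    using fin_T by (intro measure_pmf.finite_measure_subadditive_finite) auto
  also have "\<dots> \<le> (\<Sum>z\<in>T. ?p z * deviation_bound \<epsilon> N)"
    unfolding F_def using prob_frequency_deviation_le[OF fin ne \<epsilon> N] by (intro sum_mono) simp
  also have "\<dots> = (\<Sum>z\<in>T. ?p z) * deviation_bound \<epsilon> N"
    by (simp add: sum_distrib_right)
  also have "\<dots> \<le> deviation_bound \<epsilon> N"
    using mult_right_mono[OF sum_p \<open>0 \<le> deviation_bound \<epsilon> N\<close>] by simp
  finally have "measure_pmf.prob ?M (\<Union>z\<in>T. F z) \<le> deviation_bound \<epsilon> N" .
  moreover have "{Qs. frequencies_close N g \<Omega> T \<epsilon> Qs} = UNIV - (\<Union>z\<in>T. F z)"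
    by (auto simp: frequencies_close_def F_def not_le)
  ultimately show ?thesis
    using measure_pmf.prob_compl[of "\<Union>z\<in>T. F z" ?M] by simp
qed

lemma deviation_bound_less:
  fixes \<epsilon> \<delta> N :: real
  assumes \<epsilon>: "0 < \<epsilon>" "\<epsilon> < 1" and \<delta>: "0 < \<delta>" "\<delta> < 1"
    and N: "100 * (1 + ln (1 / \<delta>)) \<le> N * \<epsilon>\<^sup>2"
  shows "deviation_bound \<epsilon> N < \<delta>"
proof -
  define L where "L = ln (1 / \<delta>)"
  have "0 < L" and exp_L: "exp (- L) = \<delta>"
    using \<delta> by (simp_all add: L_def ln_div)
  have N_L: "100 * (1 + L) \<le> N * \<epsilon>\<^sup>2"
    using N by (simp add: L_def)
  have "exp (- (N * \<epsilon>\<^sup>2 / 4)) \<le> exp (- 25 + - L)"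
    using N_L \<open>0 < L\<close> by simp
  also have "\<dots> = exp (- 25) * \<delta>"
    by (simp only: exp_add exp_L)
  also have "\<dots> \<le> \<delta> / 26"
    using exp_neg_le_inverse[of 25] \<delta> by simp
  finally have first: "exp (- (N * \<epsilon>\<^sup>2 / 4)) \<le> \<delta> / 26" .
  have "L \<le> 50 * L / \<epsilon>"
    using \<open>0 < L\<close> \<epsilon> by (simp add: divide_simps)
  moreover have "N * \<epsilon> / 2 = N * \<epsilon>\<^sup>2 / (2 * \<epsilon>)"
    using \<epsilon> by (simp add: power2_eq_square)
  moreover have "100 * (1 + L) / (2 * \<epsilon>) \<le> N * \<epsilon>\<^sup>2 / (2 * \<epsilon>)"
    using N_L \<epsilon> by (intro divide_right_mono) simp_all
  moreover have "100 * (1 + L) / (2 * \<epsilon>) = 50 / \<epsilon> + 50 * L / \<epsilon>"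
    using \<epsilon> by (simp add: field_simps)
  ultimately have "- (N * \<epsilon> / 2) \<le> - (50 / \<epsilon>) + - L"
    by linarith
  then have "exp (- (N * \<epsilon> / 2)) \<le> exp (- (50 / \<epsilon>) + - L)"
    by simp
  also have "\<dots> = exp (- (50 / \<epsilon>)) * \<delta>"
    by (simp only: exp_add exp_L)
  also have "\<dots> \<le> 1 / (1 + 50 / \<epsilon>) * \<delta>"
    using exp_neg_le_inverse[of "50 / \<epsilon>"] \<epsilon> \<delta> by (intro mult_right_mono) simp_all
  also have "\<dots> = \<epsilon> / (\<epsilon> + 50) * \<delta>"
    using \<epsilon> by (simp add: field_simps)
  finally have "2 * exp 1 / \<epsilon> * exp (- (N * \<epsilon> / 2)) \<le> 2 * exp 1 / \<epsilon> * (\<epsilon> / (\<epsilon> + 50) * \<delta>)"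
    using \<epsilon> by (intro mult_left_mono) simp_all
  also have "\<dots> = 2 * exp 1 / (\<epsilon> + 50) * \<delta>"
    using \<epsilon> by (simp add: field_simps)
  also have "\<dots> \<le> 6 / 50 * \<delta>"
    using exp_le \<epsilon> \<delta> by (intro mult_right_mono frac_le) simp_all
  finally show ?thesis
    using first \<delta> by (simp add: deviation_bound_def)
qed

lemma prob_pmf_of_set_eq_1:
  assumes "finite S" "S \<noteq> {}" "S \<subseteq> G"
  shows "measure_pmf.prob (pmf_of_set S) G = 1"
  using assms by (subst measure_pmf.prob_eq_1) (auto simp: AE_measure_pmf_iff)

lemma frequency_dist_le_1:
  "\<bar>real (card {t\<in>{..<N}. A (Qs t)}) / real N - measure_pmf.prob M S\<bar> \<le> 1"
proof -
  have "card {t\<in>{..<N}. A (Qs t)} \<le> N"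
    using card_mono[of "{..<N}" "{t\<in>{..<N}. A (Qs t)}"] by auto
  then have "real (card {t\<in>{..<N}. A (Qs t)}) / real N \<le> 1"
    by (cases "N = 0") (simp_all add: divide_le_eq_1)
  moreover have "0 \<le> real (card {t\<in>{..<N}. A (Qs t)}) / real N"
    by simp
  moreover have "0 \<le> measure_pmf.prob M S" "measure_pmf.prob M S \<le> 1"
    by simp_all
  ultimately show ?thesis
    by arith
qed

lemma frequency_eq_prob_if_constant:
  fixes g :: "'a \<Rightarrow> 'b"
  assumes fin: "finite \<Omega>" and ne: "\<Omega> \<noteq> {}" and const: "\<forall>\<omega>\<in>\<Omega>. g \<omega> = c"
    and N: "0 < N" and Qs: "Qs \<in> PiE {..<N} (\<lambda>_. \<Omega>)"
  shows "real (card {t\<in>{..<N}. g (Qs t) = z}) / real N = measure_pmf.prob (pmf_of_set \<Omega>) {\<omega>. g \<omega> = z}"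
proof (cases "c = z")
  case True
  have hits: "{t\<in>{..<N}. g (Qs t) = z} = {..<N}"
    using Qs const True by (auto dest: PiE_mem)
  have "measure_pmf.prob (pmf_of_set \<Omega>) {\<omega>. g \<omega> = z} = 1"
    using True const by (intro prob_pmf_of_set_eq_1[OF fin ne]) auto
  then show ?thesis
    unfolding hits using N by simp
next
  case False
  have hits: "{t\<in>{..<N}. g (Qs t) = z} = {}"
    using Qs const False by (auto dest: PiE_mem)
  have "measure_pmf.prob (pmf_of_set \<Omega>) {\<omega>. g \<omega> = z} = 0"
    using False const fin ne by (auto simp: measure_pmf_zero_iff)
  then show ?thesis
    unfolding hits by simp
qed

lemma prob_all_frequencies_close_if_ge_1:
  assumes "finite \<Omega>" "\<Omega> \<noteq> {}" "1 \<le> \<epsilon>"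
  shows "measure_pmf.prob (pmf_of_set (PiE {..<N} (\<lambda>_. \<Omega>))) {Qs. frequencies_close N g \<Omega> T \<epsilon> Qs} = 1"
proof -
  have "\<bar>real (card {t\<in>{..<N}. g (Qs t) = z}) / real N
         - measure_pmf.prob (pmf_of_set \<Omega>) {\<omega>. g \<omega> = z}\<bar> \<le> \<epsilon>" for Qs z
    using frequency_dist_le_1[of N "\<lambda>\<omega>. g \<omega> = z" Qs "pmf_of_set \<Omega>" "{\<omega>. g \<omega> = z}"] assms(3) by linarith
  then have "frequencies_close N g \<Omega> T \<epsilon> Qs" for Qs
    by (simp add: frequencies_close_def)
  then show ?thesis
    using assms by (intro prob_pmf_of_set_eq_1) (auto simp: finite_PiE PiE_eq_empty_iff)
qed

lemma prob_all_frequencies_close_if_constant: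
  assumes fin: "finite \<Omega>" and ne: "\<Omega> \<noteq> {}" and const: "\<forall>\<omega>\<in>\<Omega>. g \<omega> = c"
    and "0 < N" "0 \<le> \<epsilon>"
  shows "measure_pmf.prob (pmf_of_set (PiE {..<N} (\<lambda>_. \<Omega>))) {Qs. frequencies_close N g \<Omega> T \<epsilon> Qs} = 1"
  using frequency_eq_prob_if_constant[OF fin ne const \<open>0 < N\<close>] assms
  by (intro prob_pmf_of_set_eq_1) (auto simp: frequencies_close_def finite_PiE PiE_eq_empty_iff)

lemma prob_all_frequencies_close_gt:
  fixes g :: "'a \<Rightarrow> 'b"
  assumes fin: "finite \<Omega>" and ne: "\<Omega> \<noteq> {}" and fin_T: "finite T"
    and \<epsilon>: "0 < \<epsilon>" and \<delta>: "0 < \<delta>" "\<delta> < 1"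
    and N: "100 * (1 + ln (1 / \<delta>)) \<le> real N * \<epsilon>\<^sup>2"
  shows "measure_pmf.prob (pmf_of_set (PiE {..<N} (\<lambda>_. \<Omega>))) {Qs. frequencies_close N g \<Omega> T \<epsilon> Qs}
         > 1 - \<delta>"
proof (cases "1 \<le> \<epsilon>")
  case True
  then show ?thesis
    using prob_all_frequencies_close_if_ge_1[OF fin ne True, of N g T] \<delta> by simp
next
  case False
  have "0 < ln (1 / \<delta>)"
    using \<delta> by simp
  then have "4 \<le> real N * \<epsilon>\<^sup>2"
    using N by (smt (verit))
  then have "1 - deviation_bound \<epsilon> (real N)
             \<le> measure_pmf.prob (pmf_of_set (PiE {..<N} (\<lambda>_. \<Omega>))) {Qs. frequencies_close N g \<Omega> T \<epsilon> Qs}"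
    using False by (intro prob_all_frequencies_close_ge[OF fin ne fin_T \<epsilon>]) simp_all
  then show ?thesis
    using deviation_bound_less[OF \<epsilon> _ \<delta> N] False by linarith
qed

theorem mainTheorem8:
  shows "\<exists>C::real. \<forall>(d::nat) (n::nat) (k::nat) (P :: nat \<Rightarrow> nat \<Rightarrow> real list)
           (med :: (nat \<Rightarrow> real list) \<Rightarrow> real list) (\<epsilon>::real) (\<delta>::real)
           (T :: real list set) (N::nat).
     0 < n \<longrightarrow> 0 < k \<longrightarrow>
     (\<forall>i<n. \<forall>j<k. length (P i j) = d) \<longrightarrow>
     (\<forall>\<sigma>\<in>traversals n k. is_L1_median d n (pts P \<sigma>) (med (pts P \<sigma>))) \<longrightarrow>
     0 < \<epsilon> \<longrightarrow> 0 < \<delta> \<longrightarrow> \<delta> < 1 \<longrightarrow>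
     finite T \<longrightarrow> (\<forall>z\<in>T. length z = d) \<longrightarrow>
     (\<forall>\<sigma>\<in>traversals n k. \<exists>z\<in>T. covers n k P (\<epsilon> / (1 + \<epsilon>)) z (med (pts P \<sigma>))) \<longrightarrow>
     real N \<ge> C / \<epsilon>^2 * (real d + ln (1 / \<delta>)) \<longrightarrow>
     measure_pmf.prob (pmf_of_set (PiE {..<N} (\<lambda>_. traversals n k)))
       {Qs. \<forall>z\<in>T.
          \<bar>real (card {t\<in>{..<N}. fT n k P \<epsilon> T (med (pts P (Qs t))) = z}) / real N
           - measure_pmf.prob (pmf_of_set (traversals n k))
               {\<sigma>. fT n k P \<epsilon> T (med (pts P \<sigma>)) = z}\<bar> \<le> \<epsilon>}
     > 1 - \<delta>"
proof (intro exI[of _ 100] allI impI)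
  fix d n k :: nat and P :: "nat \<Rightarrow> nat \<Rightarrow> real list" and med :: "(nat \<Rightarrow> real list) \<Rightarrow> real list"
    and \<epsilon> \<delta> :: real and T :: "real list set" and N :: nat
  assume "0 < k" and median: "\<forall>\<sigma>\<in>traversals n k. is_L1_median d n (pts P \<sigma>) (med (pts P \<sigma>))"
    and \<epsilon>: "0 < \<epsilon>" and \<delta>: "0 < \<delta>" "\<delta> < 1" and "finite T"
    and N: "100 / \<epsilon>\<^sup>2 * (real d + ln (1 / \<delta>)) \<le> real N"
  let ?\<Omega> = "traversals n k"
  let ?g = "\<lambda>\<sigma>. fT n k P \<epsilon> T (med (pts P \<sigma>))"
  let ?M = "pmf_of_set (PiE {..<N} (\<lambda>_. ?\<Omega>))"
  have fin: "finite ?\<Omega>" and ne: "?\<Omega> \<noteq> {}"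
    using \<open>0 < k\<close> by (auto simp: traversals_def finite_PiE PiE_eq_empty_iff)
  have "0 < ln (1 / \<delta>)" and N_scaled: "100 * (real d + ln (1 / \<delta>)) \<le> real N * \<epsilon>\<^sup>2"
    using \<delta> N \<epsilon> by (simp_all add: field_simps)
  have "measure_pmf.prob ?M {Qs. frequencies_close N ?g ?\<Omega> T \<epsilon> Qs} > 1 - \<delta>"
  proof (cases "d = 0")
    case True
    then have "\<forall>\<sigma>\<in>?\<Omega>. ?g \<sigma> = fT n k P \<epsilon> T []"
      using median by (simp add: is_L1_median_def)
    moreover have "0 < N"
      using N_scaled \<open>0 < ln (1 / \<delta>)\<close> by (cases N) auto
    ultimately show ?thesis
      using prob_all_frequencies_close_if_constant[OF fin ne] \<epsilon> \<delta> by fastforce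
  next
    case False
    then have "1 \<le> real d"
      by simp
    then have "100 * (1 + ln (1 / \<delta>)) \<le> real N * \<epsilon>\<^sup>2"
      using N_scaled by (smt (verit))
    then show ?thesis
      by (rule prob_all_frequencies_close_gt[OF fin ne \<open>finite T\<close> \<epsilon> \<delta>])
  qed
  then show "measure_pmf.prob ?M {Qs. \<forall>z\<in>T. \<bar>real (card {t\<in>{..<N}. ?g (Qs t) = z}) / real N
                                  - measure_pmf.prob (pmf_of_set ?\<Omega>) {\<sigma>. ?g \<sigma> = z}\<bar> \<le> \<epsilon>}
             > 1 - \<delta>"
    unfolding frequencies_close_def .
qed

end
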